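(* Consider a two-user ($N=2$) multi-hop decode-and-forward relay network with $L\ge 2$ hops and a fixed relay assignment, with powers, SINRs and sum-rate as defined in the context. Then there exists a power allocation $\mathbf{P}^*\in[0,P]^{2L}$ maximizing the sum-rate $R(\mathbf{P})$ over $[0,P]^{2L}$ such that (i) at least two of the $2L$ transmit powers $P^*_{i,l}$ are binary, i.e., belong to $\{0,P\}$, and (ii) the remaining transmit powers are determined by SINR matching, i.e., by the equalities $\gamma_{i,1}(\mathbf{P}^* )=\gamma_{i,l}(\mathbf{P}^* )$ for all $i\in\{1,2\}$ and all $l\in\{2,\dots,L\}$.
   Context: Setup: there are two source–destination (S-D) pairs (users) $i\in\{1,2\}$, whose information travels over $L$ hops. For a fixed relay assignment, user $i$ uses a path of nodes $r_{i,0},r_{i,1},\dots,r_{i,L}$ (source $r_{i,0}$, destination $r_{i,L}$, distinct relays of the two users in each intermediate hop). In hop $l\in\{1,\dots,L\}$ the two transmitting nodes $r_{1,l-1},r_{2,l-1}$ transmit simultaneously with powers $P_{1,l-1},P_{2,l-1}\in[0,P]$, where $P>0$ is the maximum transmit power. Let $g_{j,i,l}=|h[r_{j,l-1},r_{i,l},l]|^2>0$ denote the channel power gain from the transmitter of user $j$ to the receiver of user $i$ in hop $l$, and let $\sigma^2>0$ be the noise variance. The SINR of user $i$ in hop $l$ (interference treated as noise, $j\neq i$ the other user) is $\gamma_{i,l}(\mathbf{P})=\dfrac{P_{i,l-1}\,g_{i,i,l}}{\sigma^2+P_{j,l-1}\,g_{j,i,l}}$. The end-to-end SINR of user $i$ is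 $\min_{l\in\{1,\dots,L\}}\gamma_{i,l}$ and the sum-rate is $R(\mathbf{P})=\sum_{i=1}^{2}\log_2(1+\min_{l}\gamma_{i,l}(\mathbf{P}))$. SINR matching means choosing the powers along each user's path so that the SINRs of that user at all receiving nodes of its path are equal. *)

theory Defs
  imports Complex_Main
begin

text \<open>A power allocation is p :: nat => nat => real, where p i k is the power of the
  transmitter of user i in hop k+1 (i.e. P_{i,k}, k = 0..L-1).
  Channel gains: g j i l = g_{j,i,l} (transmitter of user j to receiver of user i in hop l).\<close>

definition other_user :: "nat \<Rightarrow> nat" where
  "other_user i = 3 - i"

definition sinr :: "(nat \<Rightarrow> nat \<Rightarrow> nat \<Rightarrow> real) \<Rightarrow> real \<Rightarrow> (nat \<Rightarrow> nat \<Rightarrow> real) \<Rightarrow> nat \<Rightarrow> nat \<Rightarrow> real" where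
  "sinr g \<sigma>2 p i l =
     p i (l - 1) * g i i l / (\<sigma>2 + p (other_user i) (l - 1) * g (other_user i) i l)"

definition e2e_sinr :: "nat \<Rightarrow> (nat \<Rightarrow> nat \<Rightarrow> nat \<Rightarrow> real) \<Rightarrow> real \<Rightarrow> (nat \<Rightarrow> nat \<Rightarrow> real) \<Rightarrow> nat \<Rightarrow> real" where
  "e2e_sinr L g \<sigma>2 p i = Min ((\<lambda>l. sinr g \<sigma>2 p i l) ` {1..L})"

definition sum_rate :: "nat \<Rightarrow> (nat \<Rightarrow> nat \<Rightarrow> nat \<Rightarrow> real) \<Rightarrow> real \<Rightarrow> (nat \<Rightarrow> nat \<Rightarrow> real) \<Rightarrow> real" where
  "sum_rate L g \<sigma>2 p = (\<Sum>i\<in>{1,2}. log 2 (1 + e2e_sinr L g \<sigma>2 p i))"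

definition feasible :: "nat \<Rightarrow> real \<Rightarrow> (nat \<Rightarrow> nat \<Rightarrow> real) \<Rightarrow> bool" where
  "feasible L P p \<longleftrightarrow> (\<forall>i\<in>{1,2}. \<forall>k<L. 0 \<le> p i k \<and> p i k \<le> P)"

definition binary_entries :: "nat \<Rightarrow> real \<Rightarrow> (nat \<Rightarrow> nat \<Rightarrow> real) \<Rightarrow> (nat \<times> nat) set" where
  "binary_entries L P p = {(i, k). i \<in> {1,2} \<and> k < L \<and> p i k \<in> {0, P}}"

end

theory Submission
  imports Defs "HOL-Analysis.Analysis"
begin

(* Maximise sum_i log (1 + t i) over the region of SINR targets t that can be met at every hop
   with powers in [0,P]. At a single hop the two SINR equations are linear in the powers, so t is
   met by the unique "matched" powers, and these lie in [0,P] iff two polynomial inequalities hold;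
   hence the region is compact, a maximiser t exists, and the matched powers realise t at every hop
   (SINR matching). Every feasible allocation has its end-to-end SINRs in the region, so the matched
   allocation is optimal.
   If some t i = 0, user i is silent on all L >= 2 hops. Otherwise at least two power constraints
   are tight (power P): with none tight, t 1 could be increased; with exactly one tight, say user i
   at full power on hop l, varying the other user's power on hop l moves t along a curve on which
   (1 + t 1) * (1 + t 2) = (1 + K / (s + r * b)) * (1 + c * b), and this has no local maximum. *)

lemma other_user_facts:
  assumes "i \<in> {1,2}"
  shows other_user_mem: "other_user i \<in> {1,2}"
    and other_user_other_user: "other_user (other_user i) = i"
    and other_user_neq: "other_user i \<noteq> i"
  using assms by (auto simp: other_user_def)

lemma user_eq_or_other:
  "i \<in> {1,2} \<Longrightarrow> k \<in> {1,2} \<Longrightarrow> k = i \<or> k = other_user i"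
  by (auto simp: other_user_def)

lemma sum_over_users:
  "i \<in> {1,2} \<Longrightarrow> (\<Sum>k\<in>{1,2}. f k) = f i + f (other_user i)"
  by (auto simp: other_user_def add.commute)

lemma log_sum_le_imp_mult_le:
  fixes a b c d :: real
  assumes "0 < a" "0 < b" "0 < c" "0 < d" "log 2 a + log 2 b \<le> log 2 c + log 2 d"
  shows "a * b \<le> c * d"
proof -
  have "log 2 (a * b) \<le> log 2 (c * d)" using assms by (simp add: log_mult)
  then show ?thesis using assms by simp
qed

lemma power_times_det_ge:
  fixes Gii Gjj Gij Gji s ti tj pi pj :: real
  assumes "0 < Gjj" "0 \<le> Gji" "0 \<le> ti"
    and "ti * (s + pj * Gji) \<le> pi * Gii" and "tj * (s + pi * Gij) \<le> pj * Gjj"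
  shows "s * ti * (Gjj + tj * Gji) \<le> pi * (Gii * Gjj - ti * tj * Gij * Gji)"
proof -
  have "ti * (s + pj * Gji) * Gjj \<le> pi * Gii * Gjj"
    using assms by (simp add: mult_right_mono)
  moreover have "ti * Gji * (tj * (s + pi * Gij)) \<le> ti * Gji * (pj * Gjj)"
    using assms by (simp add: mult_left_mono)
  ultimately show ?thesis by (simp add: algebra_simps)
qed

lemma matched_power_equation:
  fixes Gii Gjj Gij Gji s ti tj :: real
  assumes "Gii * Gjj - ti * tj * Gij * Gji \<noteq> 0"
  shows "s * ti * (Gjj + tj * Gji) / (Gii * Gjj - ti * tj * Gij * Gji) * Gii
    = ti * (s + s * tj * (Gii + ti * Gij) / (Gii * Gjj - ti * tj * Gij * Gji) * Gji)"
  using assms by (simp add: field_simps)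

lemma hyperbolic_product_diff:
  fixes K s r c b b0 :: real
  assumes "s + r * b \<noteq> 0" "s + r * b0 \<noteq> 0"
  shows "(1 + K / (s + r * b)) * (1 + c * b) - (1 + K / (s + r * b0)) * (1 + c * b0)
    = (b - b0) * (c - K * (r - c * s) / ((s + r * b) * (s + r * b0)))"
proof -
  define v v0 where "v = s + r * b" and "v0 = s + r * b0"
  have "v \<noteq> 0" "v0 \<noteq> 0" using assms unfolding v_def v0_def by auto
  then have "(1 + K / v) * (1 + c * b) - (1 + K / v0) * (1 + c * b0)
    = (b - b0) * (c - K * (r - c * s) / (v * v0))"
    by (simp add: field_simps) (simp add: v_def v0_def algebra_simps)
  then show ?thesis unfolding v_def v0_def .
qed

lemma hyperbolic_product_no_local_max:
  fixes K s r c b0 :: real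
  assumes "0 < s" "0 < r" "0 < c" "0 < b0"
  shows "\<not> (\<forall>\<^sub>F b in at b0.
           (1 + K / (s + r * b)) * (1 + c * b) \<le> (1 + K / (s + r * b0)) * (1 + c * b0))"
proof
  define h where "h b = (1 + K / (s + r * b)) * (1 + c * b)" for b
  define M where "M = K * (r - c * s)"
  assume "\<forall>\<^sub>F b in at b0. (1 + K / (s + r * b)) * (1 + c * b) \<le> (1 + K / (s + r * b0)) * (1 + c * b0)"
  then obtain d where "0 < d" and le: "\<And>b. b \<noteq> b0 \<Longrightarrow> dist b b0 < d \<Longrightarrow> h b \<le> h b0"
    unfolding eventually_at h_def by auto
  define e where "e = min (d / 2) (b0 / 2)"
  have e: "0 < e" "e < b0" "dist (b0 + e) b0 < d" "dist (b0 - e) b0 < d"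
    using \<open>0 < d\<close> assms(4) by (auto simp: e_def dist_real_def)
  have v_pos: "0 < s + r * b" if "0 \<le> b" for b
    using assms that by (simp add: add_pos_nonneg)
  have diff: "h b - h b0 = (b - b0) * (c - M / ((s + r * b) * (s + r * b0)))" if "0 \<le> b" for b
    unfolding h_def M_def using v_pos[OF that] v_pos[of b0] assms(4)
    by (intro hyperbolic_product_diff) auto
  have pos: "0 < (s + r * (b0 + e)) * (s + r * b0)" "0 < (s + r * (b0 - e)) * (s + r * b0)"
    using v_pos[of "b0 + e"] v_pos[of "b0 - e"] v_pos[of b0] e assms(4) by simp_all
  have "e * (c - M / ((s + r * (b0 + e)) * (s + r * b0))) \<le> 0"
    using le[of "b0 + e"] diff[of "b0 + e"] e by simp
  then have "c \<le> M / ((s + r * (b0 + e)) * (s + r * b0))"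
    using e by (simp add: mult_le_0_iff)
  then have "c * ((s + r * (b0 + e)) * (s + r * b0)) \<le> M"
    using pos by (simp add: pos_le_divide_eq)
  moreover have "0 \<le> e * (c - M / ((s + r * (b0 - e)) * (s + r * b0)))"
    using le[of "b0 - e"] diff[of "b0 - e"] e by simp
  then have "M / ((s + r * (b0 - e)) * (s + r * b0)) \<le> c"
    using e by (simp add: zero_le_mult_iff)
  then have "M \<le> c * ((s + r * (b0 - e)) * (s + r * b0))"
    using pos by (simp add: pos_divide_le_eq)
  moreover have "c * ((s + r * (b0 - e)) * (s + r * b0)) < c * ((s + r * (b0 + e)) * (s + r * b0))"
    using assms e v_pos[of b0] by (intro mult_strict_left_mono mult_strict_right_mono) auto
  ultimately show False by linarith
qed

type_synonym gains = "nat \<Rightarrow> nat \<Rightarrow> nat \<Rightarrow> real"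

(* For targets t >= 0, the powers meeting t at hop l are matched_power = power_need / gain_det, and
   they lie in [0,P] iff power_need <= P * gain_det for both users; this closed form, unlike the
   quotient, makes sinr_region visibly closed. *)
definition gain_det :: "gains \<Rightarrow> nat \<Rightarrow> (nat \<Rightarrow> real) \<Rightarrow> real" where
  "gain_det g l t = g 1 1 l * g 2 2 l - t 1 * t 2 * g 1 2 l * g 2 1 l"

definition power_need :: "gains \<Rightarrow> real \<Rightarrow> (nat \<Rightarrow> real) \<Rightarrow> nat \<Rightarrow> nat \<Rightarrow> real" where
  "power_need g \<sigma>2 t i l =
     \<sigma>2 * t i * (g (other_user i) (other_user i) l + t (other_user i) * g (other_user i) i l)"

definition matched_power :: "gains \<Rightarrow> real \<Rightarrow> (nat \<Rightarrow> real) \<Rightarrow> nat \<Rightarrow> nat \<Rightarrow> real" where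
  "matched_power g \<sigma>2 t i l = power_need g \<sigma>2 t i l / gain_det g l t"

definition matched_alloc :: "gains \<Rightarrow> real \<Rightarrow> (nat \<Rightarrow> real) \<Rightarrow> nat \<Rightarrow> nat \<Rightarrow> real" where
  "matched_alloc g \<sigma>2 t i k = matched_power g \<sigma>2 t i (Suc k)"

definition sinr_region :: "nat \<Rightarrow> gains \<Rightarrow> real \<Rightarrow> real \<Rightarrow> (nat \<Rightarrow> real) set" where
  "sinr_region L g \<sigma>2 P = {t. \<forall>i\<in>{1,2}. 0 \<le> t i \<and>
     (\<forall>l\<in>{1..L}. power_need g \<sigma>2 t i l \<le> P * gain_det g l t)}"

definition sum_log_rate :: "(nat \<Rightarrow> real) \<Rightarrow> real" where
  "sum_log_rate t = (\<Sum>i\<in>{1,2}. log 2 (1 + t i))"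

lemma gain_det_user_form:
  "i \<in> {1,2} \<Longrightarrow> gain_det g l t = g i i l * g (other_user i) (other_user i) l
     - t i * t (other_user i) * g i (other_user i) l * g (other_user i) i l"
  by (auto simp: gain_det_def other_user_def algebra_simps)

(* The targets obtained when, at hop l, user i transmits at power P and the other user at power b. *)
definition hop_curve ::
  "gains \<Rightarrow> real \<Rightarrow> real \<Rightarrow> (nat \<Rightarrow> real) \<Rightarrow> nat \<Rightarrow> nat \<Rightarrow> real \<Rightarrow> nat \<Rightarrow> real" where
  "hop_curve g \<sigma>2 P t i l b = t(i := P * g i i l / (\<sigma>2 + g (other_user i) i l * b),
     other_user i := g (other_user i) (other_user i) l / (\<sigma>2 + P * g i (other_user i) l) * b)"

lemma hop_curve_apply:
  assumes "i \<in> {1,2}"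
  shows "hop_curve g \<sigma>2 P t i l b i = P * g i i l / (\<sigma>2 + g (other_user i) i l * b)"
    "hop_curve g \<sigma>2 P t i l b (other_user i)
      = g (other_user i) (other_user i) l / (\<sigma>2 + P * g i (other_user i) l) * b"
  using other_user_neq[OF assms] unfolding hop_curve_def by simp_all

locale two_user_relay =
  fixes L :: nat and g :: gains and \<sigma>2 P :: real
  assumes gain_pos: "\<And>j i l. j \<in> {1,2} \<Longrightarrow> i \<in> {1,2} \<Longrightarrow> l \<in> {1..L} \<Longrightarrow> 0 < g j i l"
    and noise_pos: "0 < \<sigma>2"
    and max_power_pos: "0 < P"
begin

lemma hop_gains_pos:
  assumes "i \<in> {1,2}" "l \<in> {1..L}"
  shows "0 < g i i l" "0 < g (other_user i) (other_user i) l"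
    "0 < g i (other_user i) l" "0 < g (other_user i) i l"
  using gain_pos assms other_user_mem[OF assms(1)] by blast+

lemma gain_det_pos:
  assumes "i \<in> {1,2}" "l \<in> {1..L}" "0 \<le> t i" "0 \<le> t (other_user i)"
    and "0 \<le> a" and "power_need g \<sigma>2 t i l \<le> a * gain_det g l t"
  shows "0 < gain_det g l t"
proof (cases "t i = 0")
  case True
  then show ?thesis
    using hop_gains_pos[OF assms(1,2)] by (simp add: gain_det_user_form[OF assms(1)])
next
  case False
  then have "0 < power_need g \<sigma>2 t i l"
    using assms(3,4) noise_pos hop_gains_pos[OF assms(1,2)]
    unfolding power_need_def by (simp add: add_pos_nonneg)
  then have "0 < a * gain_det g l t" using assms(6) by linarith
  then show ?thesis using assms(5) by (simp add: zero_less_mult_iff)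
qed

lemma power_need_le_if_achieved:
  assumes i: "i \<in> {1,2}" and l: "l \<in> {1..L}"
    and p: "\<And>k. k \<in> {1,2} \<Longrightarrow> 0 \<le> p k \<and> p k \<le> P"
    and t: "\<And>k. k \<in> {1,2} \<Longrightarrow>
      0 \<le> t k \<and> t k \<le> p k * g k k l / (\<sigma>2 + p (other_user k) * g (other_user k) k l)"
  shows "power_need g \<sigma>2 t i l \<le> P * gain_det g l t"
proof -
  define j where "j = other_user i"
  have j: "j \<in> {1,2}" "other_user j = i"
    using other_user_mem[OF i] other_user_other_user[OF i] unfolding j_def by auto
  have denom_pos: "0 < \<sigma>2 + p (other_user k) * g (other_user k) k l" if "k \<in> {1,2}" for k
    using p[OF other_user_mem[OF that]] hop_gains_pos[OF that l] noise_pos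
    by (simp add: add_pos_nonneg)
  have ti: "t i * (\<sigma>2 + p j * g j i l) \<le> p i * g i i l"
    using t[OF i] denom_pos[OF i] by (simp add: j_def pos_le_divide_eq)
  have tj: "t j * (\<sigma>2 + p i * g i j l) \<le> p j * g j j l"
    using t[OF j(1)] denom_pos[OF j(1)] j(2) by (simp add: pos_le_divide_eq)
  have need_le: "power_need g \<sigma>2 t i l \<le> p i * gain_det g l t"
    using power_times_det_ge[OF _ _ _ ti tj] hop_gains_pos[OF i l] t[OF i]
    unfolding power_need_def gain_det_user_form[OF i] j_def[symmetric] by simp
  have "0 < gain_det g l t"
    using gain_det_pos[OF i l _ _ _ need_le] t[OF i] t[OF j(1)] p[OF i] by (simp add: j_def)
  then have "p i * gain_det g l t \<le> P * gain_det g l t" using p[OF i] by simp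
  then show ?thesis using need_le by linarith
qed

lemma region_power_need_le:
  "t \<in> sinr_region L g \<sigma>2 P \<Longrightarrow> i \<in> {1,2} \<Longrightarrow> l \<in> {1..L} \<Longrightarrow>
    power_need g \<sigma>2 t i l \<le> P * gain_det g l t"
  unfolding sinr_region_def by blast

lemma region_gain_det_pos:
  assumes "t \<in> sinr_region L g \<sigma>2 P" "l \<in> {1..L}"
  shows "0 < gain_det g l t"
  using assms max_power_pos unfolding sinr_region_def
  by (intro gain_det_pos[of 1 l t P]) (auto simp: other_user_def)

lemma matched_power_bounds:
  assumes t: "t \<in> sinr_region L g \<sigma>2 P" and i: "i \<in> {1,2}" and l: "l \<in> {1..L}"
  shows "0 \<le> matched_power g \<sigma>2 t i l" "matched_power g \<sigma>2 t i l \<le> P"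
proof -
  have "0 \<le> t i" "0 \<le> t (other_user i)" "power_need g \<sigma>2 t i l \<le> P * gain_det g l t"
    using t i l other_user_mem[OF i] unfolding sinr_region_def by blast+
  moreover have "0 \<le> power_need g \<sigma>2 t i l"
    using calculation noise_pos hop_gains_pos[OF i l] unfolding power_need_def by (simp add: add_pos_nonneg)
  ultimately show "0 \<le> matched_power g \<sigma>2 t i l" "matched_power g \<sigma>2 t i l \<le> P"
    using region_gain_det_pos[OF t l] unfolding matched_power_def by (simp_all add: pos_divide_le_eq)
qed

lemma matched_power_eq_max_iff:
  assumes "t \<in> sinr_region L g \<sigma>2 P" "l \<in> {1..L}"
  shows "matched_power g \<sigma>2 t i l = P \<longleftrightarrow> power_need g \<sigma>2 t i l = P * gain_det g l t"
  using region_gain_det_pos[OF assms] unfolding matched_power_def by (simp add: divide_eq_eq)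

lemma matched_power_less_max_iff:
  assumes "t \<in> sinr_region L g \<sigma>2 P" "l \<in> {1..L}"
  shows "matched_power g \<sigma>2 t i l < P \<longleftrightarrow> power_need g \<sigma>2 t i l < P * gain_det g l t"
  using region_gain_det_pos[OF assms] unfolding matched_power_def by (simp add: divide_less_eq)

lemma matched_power_sinr:
  assumes t: "t \<in> sinr_region L g \<sigma>2 P" and i: "i \<in> {1,2}" and l: "l \<in> {1..L}"
  shows "matched_power g \<sigma>2 t i l * g i i l
    / (\<sigma>2 + matched_power g \<sigma>2 t (other_user i) l * g (other_user i) i l) = t i"
proof -
  define j where "j = other_user i"
  have j: "j \<in> {1,2}" "other_user j = i"
    using other_user_mem[OF i] other_user_other_user[OF i] unfolding j_def by auto
  have det: "gain_det g l t \<noteq> 0" using region_gain_det_pos[OF t l] by simp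
  have "0 \<le> matched_power g \<sigma>2 t j l" by (rule matched_power_bounds(1)[OF t j(1) l])
  then have denom: "0 < \<sigma>2 + matched_power g \<sigma>2 t j l * g j i l"
    using noise_pos hop_gains_pos[OF i l] by (simp add: j_def add_pos_nonneg)
  have "matched_power g \<sigma>2 t i l * g i i l = t i * (\<sigma>2 + matched_power g \<sigma>2 t j l * g j i l)"
    using matched_power_equation[of "g i i l" "g j j l" "t i" "t j" "g i j l" "g j i l" \<sigma>2] det
    unfolding matched_power_def power_need_def j(2) gain_det_user_form[OF i] j_def[symmetric] by simp
  then show ?thesis using denom by (simp add: j_def)
qed

lemma sinr_nonneg:
  assumes "feasible L P q" "i \<in> {1,2}" "l \<in> {1..L}"
  shows "0 \<le> sinr g \<sigma>2 q i l"
proof -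
  have "0 \<le> q k (l - 1)" if "k \<in> {1,2}" for k
    using assms(1,3) that unfolding feasible_def by auto
  then show ?thesis
    using other_user_mem[OF assms(2)] assms(2) hop_gains_pos[OF assms(2,3)] noise_pos
    unfolding sinr_def by (simp add: add_pos_nonneg)
qed

lemma e2e_sinr_in_region:
  assumes L: "1 \<le> L" and q: "feasible L P q"
  shows "e2e_sinr L g \<sigma>2 q \<in> sinr_region L g \<sigma>2 P"
proof -
  have e2e_le: "e2e_sinr L g \<sigma>2 q i \<le> sinr g \<sigma>2 q i l" if "l \<in> {1..L}" for i l
    unfolding e2e_sinr_def using that by (intro Min_le) auto
  have e2e_nonneg: "0 \<le> e2e_sinr L g \<sigma>2 q i" if "i \<in> {1,2}" for i
    unfolding e2e_sinr_def using L sinr_nonneg[OF q that] by (subst Min_ge_iff) auto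
  have "power_need g \<sigma>2 (e2e_sinr L g \<sigma>2 q) i l \<le> P * gain_det g l (e2e_sinr L g \<sigma>2 q)"
    if "i \<in> {1,2}" "l \<in> {1..L}" for i l
  proof (rule power_need_le_if_achieved[OF that, where p = "\<lambda>k. q k (l - 1)"])
    show "0 \<le> q k (l - 1) \<and> q k (l - 1) \<le> P" if "k \<in> {1,2}" for k
      using q that \<open>l \<in> {1..L}\<close> unfolding feasible_def by auto
    show "0 \<le> e2e_sinr L g \<sigma>2 q k \<and> e2e_sinr L g \<sigma>2 q k
        \<le> q k (l - 1) * g k k l / (\<sigma>2 + q (other_user k) (l - 1) * g (other_user k) k l)"
      if "k \<in> {1,2}" for k
      using e2e_nonneg[OF that] e2e_le[OF \<open>l \<in> {1..L}\<close>, of k] unfolding sinr_def by simp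
  qed
  then show ?thesis using e2e_nonneg unfolding sinr_region_def by blast
qed

lemma sinr_matched_alloc:
  assumes "t \<in> sinr_region L g \<sigma>2 P" "i \<in> {1,2}" "l \<in> {1..L}"
  shows "sinr g \<sigma>2 (matched_alloc g \<sigma>2 t) i l = t i"
  using matched_power_sinr[OF assms] assms(3) unfolding sinr_def matched_alloc_def by simp

lemma matched_alloc_feasible:
  assumes "t \<in> sinr_region L g \<sigma>2 P"
  shows "feasible L P (matched_alloc g \<sigma>2 t)"
  using matched_power_bounds[OF assms] unfolding feasible_def matched_alloc_def by simp

lemma e2e_sinr_matched_alloc:
  assumes "1 \<le> L" "t \<in> sinr_region L g \<sigma>2 P" "i \<in> {1,2}"
  shows "e2e_sinr L g \<sigma>2 (matched_alloc g \<sigma>2 t) i = t i"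
proof -
  have "(\<lambda>l. sinr g \<sigma>2 (matched_alloc g \<sigma>2 t) i l) ` {1..L} = {t i}"
    using sinr_matched_alloc[OF assms(2,3)] assms(1) by auto
  then show ?thesis unfolding e2e_sinr_def by simp
qed

lemma region_target_le:
  assumes t: "t \<in> sinr_region L g \<sigma>2 P" and i: "i \<in> {1,2}" and l: "l \<in> {1..L}"
  shows "t i \<le> P * g i i l / \<sigma>2"
proof -
  define j where "j = other_user i"
  have tj: "0 \<le> t i" "0 \<le> t j" "power_need g \<sigma>2 t i l \<le> P * gain_det g l t"
    using t i l other_user_mem[OF i] unfolding sinr_region_def j_def by blast+
  note gains = hop_gains_pos[OF i l, folded j_def]
  have "\<sigma>2 * t i * g j j l \<le> power_need g \<sigma>2 t i l"
    using tj gains noise_pos unfolding power_need_def j_def[symmetric]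
    by (intro mult_left_mono) auto
  also have "\<dots> \<le> P * gain_det g l t" by (fact tj(3))
  also have "\<dots> \<le> P * g i i l * g j j l"
    using tj gains max_power_pos unfolding gain_det_user_form[OF i] j_def[symmetric]
    by (simp add: mult_left_mono)
  finally show ?thesis
    using gains noise_pos by (simp add: pos_le_divide_eq mult.commute mult.left_commute)
qed

lemma sinr_region_cong:
  "t 1 = t' 1 \<Longrightarrow> t 2 = t' 2 \<Longrightarrow> t \<in> sinr_region L g \<sigma>2 P \<longleftrightarrow> t' \<in> sinr_region L g \<sigma>2 P"
  by (simp add: sinr_region_def power_need_def gain_det_def other_user_def)

lemma exists_rate_maximizer:
  assumes "1 \<le> L"
  shows "\<exists>t\<in>sinr_region L g \<sigma>2 P. \<forall>t'\<in>sinr_region L g \<sigma>2 P. sum_log_rate t' \<le> sum_log_rate t"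
proof -
  define pair_targets :: "real \<times> real \<Rightarrow> nat \<Rightarrow> real"
    where "pair_targets z i = (if i = 1 then fst z else snd z)" for z i
  define R where "R = pair_targets -` sinr_region L g \<sigma>2 P"
  have R_eq: "R = {z. 0 \<le> fst z} \<inter> {z. 0 \<le> snd z} \<inter> (\<Inter>l\<in>{1..L}.
      {z. \<sigma>2 * fst z * (g 2 2 l + snd z * g 2 1 l)
            \<le> P * (g 1 1 l * g 2 2 l - fst z * snd z * g 1 2 l * g 2 1 l)} \<inter>
      {z. \<sigma>2 * snd z * (g 1 1 l + fst z * g 1 2 l)
            \<le> P * (g 1 1 l * g 2 2 l - fst z * snd z * g 1 2 l * g 2 1 l)})"
    by (auto simp: R_def sinr_region_def power_need_def gain_det_def other_user_def pair_targets_def)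
  have rate_pair: "sum_log_rate (pair_targets z) = log 2 (1 + fst z) + log 2 (1 + snd z)" for z
    by (simp add: sum_log_rate_def pair_targets_def)
  have "closed R"
    unfolding R_eq by (intro closed_Int closed_INT ballI closed_Collect_le continuous_intros)
  moreover have "bounded R"
  proof (rule bounded_subset[OF compact_imp_bounded[OF compact_Times[OF compact_Icc compact_Icc]]])
    show "R \<subseteq> {0..P * g 1 1 1 / \<sigma>2} \<times> {0..P * g 2 2 1 / \<sigma>2}"
    proof
      fix z assume "z \<in> R"
      then have t: "pair_targets z \<in> sinr_region L g \<sigma>2 P" by (simp add: R_def)
      have "fst z \<le> P * g 1 1 1 / \<sigma>2" "snd z \<le> P * g 2 2 1 / \<sigma>2"
        using region_target_le[OF t, of 1 1] region_target_le[OF t, of 2 1] assms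
        by (simp_all add: pair_targets_def)
      moreover have "0 \<le> fst z" "0 \<le> snd z" using \<open>z \<in> R\<close> by (simp_all add: R_eq)
      ultimately show "z \<in> {0..P * g 1 1 1 / \<sigma>2} \<times> {0..P * g 2 2 1 / \<sigma>2}"
        by (simp add: mem_Times_iff)
    qed
  qed
  ultimately have "compact R" by (simp add: compact_eq_bounded_closed)
  moreover have "(0, 0) \<in> R"
    using gain_pos max_power_pos unfolding R_eq by (auto intro: less_imp_le)
  moreover have "continuous_on R (\<lambda>z. sum_log_rate (pair_targets z))"
    unfolding rate_pair log_def by (intro continuous_intros) (auto simp: R_eq)
  ultimately obtain z where z: "z \<in> R"
    and z_max: "\<And>w. w \<in> R \<Longrightarrow> sum_log_rate (pair_targets w) \<le> sum_log_rate (pair_targets z)"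
    using continuous_attains_sup[of R] by blast
  have "sum_log_rate t' \<le> sum_log_rate (pair_targets z)" if "t' \<in> sinr_region L g \<sigma>2 P" for t'
  proof -
    have "(t' 1, t' 2) \<in> R"
      using that sinr_region_cong[of "pair_targets (t' 1, t' 2)" t'] by (simp add: R_def pair_targets_def)
    moreover have "sum_log_rate t' = sum_log_rate (pair_targets (t' 1, t' 2))"
      unfolding rate_pair by (simp add: sum_log_rate_def)
    ultimately show ?thesis using z_max by simp
  qed
  then show ?thesis using z unfolding R_def by blast
qed

lemma eventually_in_region_along:
  fixes T :: "real \<Rightarrow> nat \<Rightarrow> real"
  assumes cont: "\<And>i. i \<in> {1,2} \<Longrightarrow> isCont (\<lambda>b. T b i) b0"
    and pos: "\<And>i. i \<in> {1,2} \<Longrightarrow> 0 < T b0 i"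
    and need: "\<And>i l. i \<in> {1,2} \<Longrightarrow> l \<in> {1..L} \<Longrightarrow>
      power_need g \<sigma>2 (T b0) i l < P * gain_det g l (T b0)
      \<or> (\<forall>\<^sub>F b in at b0. power_need g \<sigma>2 (T b) i l \<le> P * gain_det g l (T b))"
  shows "\<forall>\<^sub>F b in at b0. T b \<in> sinr_region L g \<sigma>2 P"
  unfolding sinr_region_def mem_Collect_eq
proof (intro eventually_ball_finite ballI eventually_conj)
  fix i :: nat assume i: "i \<in> {1,2}"
  show "\<forall>\<^sub>F b in at b0. 0 \<le> T b i"
    using order_tendstoD(1)[OF cont[OF i, unfolded isCont_def] pos[OF i]]
    by (auto elim: eventually_mono)
  fix l assume l: "l \<in> {1..L}"
  define slack where "slack b = P * gain_det g l (T b) - power_need g \<sigma>2 (T b) i l" for b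
  have "isCont slack b0"
    using cont[of 1] cont[of 2] cont[OF i] cont[OF other_user_mem[OF i]]
    unfolding slack_def power_need_def gain_det_def by (intro continuous_intros) auto
  then have "0 < slack b0 \<Longrightarrow> \<forall>\<^sub>F b in at b0. 0 < slack b"
    unfolding isCont_def by (rule order_tendstoD(1))
  then show "\<forall>\<^sub>F b in at b0. power_need g \<sigma>2 (T b) i l \<le> P * gain_det g l (T b)"
    using need[OF i l] unfolding slack_def by (auto elim!: eventually_mono)
qed auto

lemma matched_power_pos:
  assumes t: "t \<in> sinr_region L g \<sigma>2 P" and i: "i \<in> {1,2}" and l: "l \<in> {1..L}"
    and "0 < t i" "0 < t (other_user i)"
  shows "0 < matched_power g \<sigma>2 t i l"
proof -
  have "0 < power_need g \<sigma>2 t i l"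
    using assms(4,5) hop_gains_pos[OF i l] noise_pos unfolding power_need_def by (simp add: add_pos_pos)
  then show ?thesis using region_gain_det_pos[OF t l] unfolding matched_power_def by simp
qed

lemma hop_curve_at_matched_power:
  assumes t: "t \<in> sinr_region L g \<sigma>2 P" and i: "i \<in> {1,2}" and l: "l \<in> {1..L}"
    and full: "matched_power g \<sigma>2 t i l = P"
  shows "hop_curve g \<sigma>2 P t i l (matched_power g \<sigma>2 t (other_user i) l) = t"
proof -
  define j where "j = other_user i"
  have j: "j \<in> {1,2}" "other_user j = i"
    using other_user_mem[OF i] other_user_other_user[OF i] unfolding j_def by auto
  have "P * g i i l / (\<sigma>2 + g j i l * matched_power g \<sigma>2 t j l) = t i"
    using matched_power_sinr[OF t i l] full by (simp add: j_def mult.commute)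
  moreover have "g j j l / (\<sigma>2 + P * g i j l) * matched_power g \<sigma>2 t j l = t j"
    using matched_power_sinr[OF t j(1) l] full by (simp add: j(2) mult.commute)
  ultimately show ?thesis unfolding hop_curve_def j_def[symmetric] by simp
qed

lemma hop_curve_eventually_in_region:
  assumes t: "t \<in> sinr_region L g \<sigma>2 P" and pos: "\<And>k. k \<in> {1,2} \<Longrightarrow> 0 < t k"
    and i: "i \<in> {1,2}" and l: "l \<in> {1..L}" and full: "matched_power g \<sigma>2 t i l = P"
    and slack: "\<And>k m. k \<in> {1,2} \<Longrightarrow> m \<in> {1..L} \<Longrightarrow> (k, m) \<noteq> (i, l) \<Longrightarrow>
      power_need g \<sigma>2 t k m < P * gain_det g m t"
  shows "\<forall>\<^sub>F b in at (matched_power g \<sigma>2 t (other_user i) l).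
           hop_curve g \<sigma>2 P t i l b \<in> sinr_region L g \<sigma>2 P"
proof -
  define j where "j = other_user i"
  define b0 where "b0 = matched_power g \<sigma>2 t j l"
  have j: "j \<in> {1,2}" "other_user j = i" "j \<noteq> i"
    using other_user_facts[OF i] unfolding j_def by auto
  note gains = hop_gains_pos[OF i l, folded j_def]
  have curve_b0: "hop_curve g \<sigma>2 P t i l b0 = t"
    using hop_curve_at_matched_power[OF t i l full] by (simp add: b0_def j_def)
  have b0_pos: "0 < b0"
    using matched_power_pos[OF t j(1) l pos[OF j(1)]] pos[OF i] j(2) unfolding b0_def by simp
  have b0_less: "b0 < P"
    using slack[OF j(1) l] j(3) matched_power_less_max_iff[OF t l] unfolding b0_def by simp
  note curve_i = hop_curve_apply(1)[OF i, of g \<sigma>2 P t l, folded j_def]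
  note curve_j = hop_curve_apply(2)[OF i, of g \<sigma>2 P t l, folded j_def]
  have "\<forall>\<^sub>F b in at b0. hop_curve g \<sigma>2 P t i l b \<in> sinr_region L g \<sigma>2 P"
  proof (rule eventually_in_region_along)
    fix k :: nat assume k: "k \<in> {1,2}"
    then have "k = i \<or> k = j" using user_eq_or_other[OF i] by (simp add: j_def)
    then show "isCont (\<lambda>b. hop_curve g \<sigma>2 P t i l b k) b0"
    proof (elim disjE)
      have "\<sigma>2 + g j i l * b0 \<noteq> 0" using gains(4) noise_pos b0_pos by (smt (verit) mult_pos_pos)
      then show "isCont (\<lambda>b. hop_curve g \<sigma>2 P t i l b k) b0" if "k = i"
        unfolding that curve_i by (intro continuous_intros)
      show "isCont (\<lambda>b. hop_curve g \<sigma>2 P t i l b k) b0" if "k = j"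
        unfolding that curve_j by (intro continuous_intros)
    qed
    show "0 < hop_curve g \<sigma>2 P t i l b0 k" using pos[OF k] curve_b0 by simp
    fix m assume m: "m \<in> {1..L}"
    show "power_need g \<sigma>2 (hop_curve g \<sigma>2 P t i l b0) k m < P * gain_det g m (hop_curve g \<sigma>2 P t i l b0)
      \<or> (\<forall>\<^sub>F b in at b0. power_need g \<sigma>2 (hop_curve g \<sigma>2 P t i l b) k m
            \<le> P * gain_det g m (hop_curve g \<sigma>2 P t i l b))"
    proof (cases "(k, m) = (i, l)")
      case True
      have "\<forall>\<^sub>F b in at b0. 0 < b \<and> b < P"
        using order_tendstoD[OF tendsto_ident_at b0_pos] order_tendstoD[OF tendsto_ident_at b0_less]
        by (simp add: eventually_conj)
      then have "\<forall>\<^sub>F b in at b0. power_need g \<sigma>2 (hop_curve g \<sigma>2 P t i l b) i l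
          \<le> P * gain_det g l (hop_curve g \<sigma>2 P t i l b)"
      proof (rule eventually_mono)
        fix b :: real assume b: "0 < b \<and> b < P"
        show "power_need g \<sigma>2 (hop_curve g \<sigma>2 P t i l b) i l
          \<le> P * gain_det g l (hop_curve g \<sigma>2 P t i l b)"
        proof (rule power_need_le_if_achieved[OF i l, where p = "\<lambda>k. if k = i then P else b"])
          fix k :: nat assume "k \<in> {1,2}"
          then have k: "k = i \<or> k = j" using user_eq_or_other[OF i] by (simp add: j_def)
          show "0 \<le> (if k = i then P else b) \<and> (if k = i then P else b) \<le> P"
            using b max_power_pos by simp
          have "hop_curve g \<sigma>2 P t i l b i = P * g i i l / (\<sigma>2 + b * g j i l)"
            "hop_curve g \<sigma>2 P t i l b j = b * g j j l / (\<sigma>2 + P * g i j l)"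
            unfolding curve_i curve_j by (simp_all add: mult.commute)
          moreover have "0 \<le> P * g i i l / (\<sigma>2 + b * g j i l)" "0 \<le> b * g j j l / (\<sigma>2 + P * g i j l)"
            using b gains noise_pos max_power_pos by (simp_all add: add_pos_pos)
          ultimately show "0 \<le> hop_curve g \<sigma>2 P t i l b k \<and> hop_curve g \<sigma>2 P t i l b k
              \<le> (if k = i then P else b) * g k k l
                / (\<sigma>2 + (if other_user k = i then P else b) * g (other_user k) k l)"
            using k j(2,3) by (elim disjE) (simp_all add: j_def[symmetric])
        qed
      qed
      then show ?thesis using True by simp
    next
      case False
      then show ?thesis using slack[OF k m] curve_b0 by simp
    qed
  qed
  then show ?thesis by (simp add: b0_def j_def)
qed

context
  fixes t :: "nat \<Rightarrow> real"
  assumes t_region: "t \<in> sinr_region L g \<sigma>2 P"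
    and t_max: "\<And>t'. t' \<in> sinr_region L g \<sigma>2 P \<Longrightarrow> sum_log_rate t' \<le> sum_log_rate t"
begin

lemma maximizer_has_tight_need:
  assumes pos: "\<And>k. k \<in> {1,2} \<Longrightarrow> 0 < t k"
  shows "\<exists>i\<in>{1,2}. \<exists>l\<in>{1..L}. power_need g \<sigma>2 t i l = P * gain_det g l t"
proof (rule ccontr)
  assume no_tight: "\<not> ?thesis"
  have slack: "power_need g \<sigma>2 t i l < P * gain_det g l t" if "i \<in> {1,2}" "l \<in> {1..L}" for i l
    using no_tight that region_power_need_le[OF t_region that]
    by (blast intro: order.not_eq_order_implies_strict)
  define T where "T e = t(1 := t 1 + e)" for e :: real
  have "\<forall>\<^sub>F e in at 0. T e \<in> sinr_region L g \<sigma>2 P"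
  proof (rule eventually_in_region_along)
    show "isCont (\<lambda>e. T e i) 0" for i
      unfolding T_def by (cases "i = 1") (simp_all add: continuous_intros)
  qed (use pos slack in \<open>auto simp: T_def\<close>)
  then have "\<forall>\<^sub>F e in at_right 0. 0 < e \<and> sum_log_rate (T e) \<le> sum_log_rate t"
    using t_max eventually_at_right_less[of 0] by (auto simp: eventually_at_split elim: eventually_elim2)
  then obtain e :: real where "0 < e" "sum_log_rate (T e) \<le> sum_log_rate t"
    using eventually_happens'[OF trivial_limit_at_right_real] by blast
  moreover have "sum_log_rate t < sum_log_rate (T e)"
    using \<open>0 < e\<close> pos[of 1] by (simp add: sum_log_rate_def T_def)
  ultimately show False by simp
qed

lemma maximizer_has_second_tight_need:
  assumes pos: "\<And>k. k \<in> {1,2} \<Longrightarrow> 0 < t k"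
    and i: "i \<in> {1,2}" and l: "l \<in> {1..L}" and tight: "power_need g \<sigma>2 t i l = P * gain_det g l t"
  shows "\<exists>k\<in>{1,2}. \<exists>m\<in>{1..L}. (k, m) \<noteq> (i, l) \<and> power_need g \<sigma>2 t k m = P * gain_det g m t"
proof (rule ccontr)
  assume no_second: "\<not> ?thesis"
  have slack: "power_need g \<sigma>2 t k m < P * gain_det g m t"
    if "k \<in> {1,2}" "m \<in> {1..L}" "(k, m) \<noteq> (i, l)" for k m
    using no_second that region_power_need_le[OF t_region that(1,2)]
    by (blast intro: order.not_eq_order_implies_strict)
  define j where "j = other_user i"
  define b0 where "b0 = matched_power g \<sigma>2 t j l"
  define K r c where "K = P * g i i l" and "r = g j i l" and "c = g j j l / (\<sigma>2 + P * g i j l)"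
  define H where "H b = (1 + K / (\<sigma>2 + r * b)) * (1 + c * b)" for b
  have j: "j \<in> {1,2}" "other_user j = i"
    using other_user_mem[OF i] other_user_other_user[OF i] unfolding j_def by auto
  note gains = hop_gains_pos[OF i l, folded j_def]
  have full: "matched_power g \<sigma>2 t i l = P" using matched_power_eq_max_iff[OF t_region l] tight by simp
  have b0_pos: "0 < b0"
    using matched_power_pos[OF t_region j(1) l pos[OF j(1)]] pos[OF i] j(2) unfolding b0_def by simp
  have curve_b0: "hop_curve g \<sigma>2 P t i l b0 = t"
    using hop_curve_at_matched_power[OF t_region i l full] by (simp add: b0_def j_def)
  have rate_on_curve: "sum_log_rate (hop_curve g \<sigma>2 P t i l b)
      = log 2 (1 + K / (\<sigma>2 + r * b)) + log 2 (1 + c * b)" for b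
    using hop_curve_apply[OF i] unfolding sum_log_rate_def sum_over_users[OF i] K_def r_def c_def j_def
    by simp
  have H_pos: "0 < 1 + K / (\<sigma>2 + r * b)" "0 < 1 + c * b" if "0 \<le> b" for b
    using that gains noise_pos max_power_pos unfolding K_def r_def c_def by (simp_all add: add_pos_nonneg)
  have "\<forall>\<^sub>F b in at b0. hop_curve g \<sigma>2 P t i l b \<in> sinr_region L g \<sigma>2 P \<and> 0 < b"
    using hop_curve_eventually_in_region[OF t_region pos i l full slack] order_tendstoD(1)[OF tendsto_ident_at b0_pos]
    unfolding b0_def j_def by (auto intro: eventually_conj)
  then have "\<forall>\<^sub>F b in at b0. H b \<le> H b0"
  proof (rule eventually_mono)
    fix b assume b: "hop_curve g \<sigma>2 P t i l b \<in> sinr_region L g \<sigma>2 P \<and> 0 < b"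
    then have "sum_log_rate (hop_curve g \<sigma>2 P t i l b) \<le> sum_log_rate (hop_curve g \<sigma>2 P t i l b0)"
      using t_max curve_b0 by simp
    then show "H b \<le> H b0"
      unfolding rate_on_curve H_def using H_pos[of b] H_pos[of b0] b b0_pos
      by (intro log_sum_le_imp_mult_le) auto
  qed
  moreover have "\<not> (\<forall>\<^sub>F b in at b0. H b \<le> H b0)"
    unfolding H_def using gains noise_pos max_power_pos b0_pos unfolding r_def c_def
    by (intro hyperbolic_product_no_local_max) (simp_all add: add_pos_pos)
  ultimately show False by contradiction
qed

lemma two_le_card_binary_entries:
  assumes L: "2 \<le> L"
  shows "2 \<le> card (binary_entries L P (matched_alloc g \<sigma>2 t))"
proof -
  define B where "B = binary_entries L P (matched_alloc g \<sigma>2 t)"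
  have "finite B"
    by (rule finite_subset[of _ "{1,2} \<times> {..<L}"]) (auto simp: B_def binary_entries_def)
  then have two: "2 \<le> card B" if "a \<in> B" "b \<in> B" "a \<noteq> b" for a b
    using card_mono[of B "{a, b}"] that by simp
  have in_B: "(i, l - 1) \<in> B" if "i \<in> {1,2}" "l \<in> {1..L}" "matched_power g \<sigma>2 t i l \<in> {0, P}" for i l
    using that unfolding B_def binary_entries_def matched_alloc_def by auto
  have nonneg: "0 \<le> t k" if "k \<in> {1,2}" for k
    using t_region that unfolding sinr_region_def by blast
  show ?thesis
  proof (cases "\<exists>i\<in>{1,2}. t i = 0")
    case True
    then obtain i where i: "i \<in> {1,2}" "t i = 0" by blast
    then have "matched_power g \<sigma>2 t i l = 0" for l
      unfolding matched_power_def power_need_def by simp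
    then show ?thesis
      using in_B[OF i(1), of 1] in_B[OF i(1), of 2] L two by (simp add: B_def)
  next
    case False
    have active: "0 < t k" if "k \<in> {1,2}" for k
      using False nonneg[OF that] that by (auto simp: less_le)
    obtain i l where il: "i \<in> {1,2}" "l \<in> {1..L}" "power_need g \<sigma>2 t i l = P * gain_det g l t"
      using maximizer_has_tight_need[OF active] by blast
    obtain k m where km: "k \<in> {1,2}" "m \<in> {1..L}" "(k, m) \<noteq> (i, l)"
      "power_need g \<sigma>2 t k m = P * gain_det g m t"
      using maximizer_has_second_tight_need[OF active il] by blast
    have "(i, l - 1) \<in> B" "(k, m - 1) \<in> B" "(i, l - 1) \<noteq> (k, m - 1)"
      using in_B il km matched_power_eq_max_iff[OF t_region] by auto
    then show ?thesis using two by (simp add: B_def)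
  qed
qed

end

end

theorem theorem1:
  fixes L :: nat and P \<sigma>2 :: real and g :: "nat \<Rightarrow> nat \<Rightarrow> nat \<Rightarrow> real"
  assumes "L \<ge> 2" and "P > 0" and "\<sigma>2 > 0"
    and "\<And>j i l. j \<in> {1,2} \<Longrightarrow> i \<in> {1,2} \<Longrightarrow> l \<in> {1..L} \<Longrightarrow> g j i l > 0"
  shows "\<exists>p. feasible L P p
            \<and> (\<forall>q. feasible L P q \<longrightarrow> sum_rate L g \<sigma>2 q \<le> sum_rate L g \<sigma>2 p)
            \<and> card (binary_entries L P p) \<ge> 2
            \<and> (\<forall>i\<in>{1,2}. \<forall>l\<in>{2..L}. sinr g \<sigma>2 p i 1 = sinr g \<sigma>2 p i l)"
proof -
  interpret two_user_relay L g \<sigma>2 P using assms by unfold_locales auto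
  have L: "1 \<le> L" using assms(1) by simp
  obtain t where t: "t \<in> sinr_region L g \<sigma>2 P"
    and t_max: "\<And>t'. t' \<in> sinr_region L g \<sigma>2 P \<Longrightarrow> sum_log_rate t' \<le> sum_log_rate t"
    using exists_rate_maximizer[OF L] by blast
  have rate: "sum_rate L g \<sigma>2 q = sum_log_rate (e2e_sinr L g \<sigma>2 q)" for q
    by (simp add: sum_rate_def sum_log_rate_def)
  show ?thesis
  proof (intro exI conjI allI impI ballI)
    show "feasible L P (matched_alloc g \<sigma>2 t)" by (rule matched_alloc_feasible[OF t])
    show "sum_rate L g \<sigma>2 q \<le> sum_rate L g \<sigma>2 (matched_alloc g \<sigma>2 t)" if "feasible L P q" for q
      using t_max[OF e2e_sinr_in_region[OF L that]] e2e_sinr_matched_alloc[OF L t]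
      unfolding rate sum_log_rate_def by simp
    show "2 \<le> card (binary_entries L P (matched_alloc g \<sigma>2 t))"
      by (rule two_le_card_binary_entries[OF t t_max assms(1)])
    show "sinr g \<sigma>2 (matched_alloc g \<sigma>2 t) i 1 = sinr g \<sigma>2 (matched_alloc g \<sigma>2 t) i l"
      if "i \<in> {1,2}" "l \<in> {2..L}" for i l
      using sinr_matched_alloc[OF t that(1)] L that(2) by simp
  qed
qed

end
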